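(* Let $\langle\{a,b\},C,d,O,v,\{\prec,\prec^{-1}\}\rangle$ be a two-player infinite sequential game in which player $a$ has preference $\prec$ and player $b$ has preference $\prec^{-1}$, let $\Gamma\subseteq\mathcal{P}(C^\omega)$, and assume: (1) $\prec$ is a strict weak order; (2) for every play $p\in C^\omega$ and increasing $\varphi:\mathbb{N}\to\mathbb{N}$, if $d(p_{<\varphi(n)})=a$ and $G_a(p_{<\varphi(n+1)})\subsetneq G_a(p_{<\varphi(n)})$ for all $n$, then $v(p)\in\bigcap_n G_a(p_{<\varphi(n)})$; (3) for all $\gamma\in C^*$ there exists a strategy $s$ of $a$ with $g_a(\gamma,s)=G_a(\gamma)$, and there exists a strategy $s$ of $b$ with $g_b(\gamma,s)=G_b(\gamma)$; (4) for every non-empty closed $E\subseteq C^\omega$, $v[E]$ has a $\prec$-maximal and a $\prec$-minimal element (i.e. some $o\in v[E]$ with $\neg(o\prec o')$ for all $o'\in v[E]$, and some $o\in v[E]$ with $\neg(o'\prec o)$ for all $o'\in v[E]$); (5) for every $\prec$-extremal interval $I$ and $\gamma\in C^*$, $v^{-1}[I]\cap\gamma C^\omega\in\Gamma$; (6) the win-lose game $\langle C,D,W\rangle$ is determined for all $W\in\Gamma$ and $D\subseteq C^*$. Then the game has a subgame perfect equilibrium.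
   Context: A strategy of player $X$ is a function $s:d^{-1}(\{X\})\to C$; a profile is identified with $\sigma:C^*\to C$. For $\gamma\in C^*$, the play $p^\gamma(\sigma)$ is given by $p_n=\gamma_n$ for $n<|\gamma|$ and $p_n=\sigma(p_{<n})$ otherwise ($p_{<n}$ the length-$n$ prefix). A profile $\sigma$ is a subgame perfect equilibrium if there are no $\gamma\in C^*$, player $X$ and strategy $s$ of $X$ such that $v(p^\gamma(\sigma))\prec_X v(p^\gamma(\sigma_{X\mapsto s}))$ (with $\prec_a=\prec$, $\prec_b=\prec^{-1}$, and $\sigma_{X\mapsto s}$ agreeing with $s$ on $d^{-1}(\{X\})$ and with $\sigma$ elsewhere). For a partial $t:\subseteq C^*\to C$, $P(t)$ is the set of plays $p(\sigma)$ of total $\sigma$ extending $t$. For a strategy $s$ of $X$ and $\gamma\in C^*$, $s|_\gamma$ is its restriction to histories extending $\gamma$; $g_X(\gamma,s):=\{o\in O\mid\exists p\in P(s|_\gamma)\cap\gamma C^\omega,\ \neg(o\prec_X v(p))\}$ and $G_X(\gamma):=\bigcap_s g_X(\gamma,s)$. A strict weak order is an irreflexive, transitive relation with $\neg(x\prec y)\wedge\neg(y\prec z)\Rightarrow\neg(x\prec z)$. A $\prec$-extremal interval is a set $I\subseteq O$ that is either terminal (if $o\in I$ and $\neg(o'\prec o)$ then $o'\in I$) or initial (if $o\in I$ and $\neg(o\prec o')$ then $o'\in I$). The win-lose game $\langle C,D,W\rangle$ ($D\subseteq C^*$, $W\subseteq C^\omega$) is the two-player game where the first player chooses after histories in $D$,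 the second after histories in $C^*\setminus D$, and the first player wins iff the play lies in $W$; it is determined if one of the players has a winning strategy. *)

theory Defs
  imports Main
begin

datatype player = Pa | Pb

definition pre :: "(nat \<Rightarrow> 'c) \<Rightarrow> nat \<Rightarrow> 'c list" where
  "pre p n = map p [0..<n]"

fun hist :: "'c list \<Rightarrow> ('c list \<Rightarrow> 'c) \<Rightarrow> nat \<Rightarrow> 'c list" where
  "hist \<gamma> \<sigma> 0 = []"
| "hist \<gamma> \<sigma> (Suc n) =
     hist \<gamma> \<sigma> n @ [if n < length \<gamma> then \<gamma> ! n else \<sigma> (hist \<gamma> \<sigma> n)]"

definition playg :: "'c list \<Rightarrow> ('c list \<Rightarrow> 'c) \<Rightarrow> nat \<Rightarrow> 'c" where
  "playg \<gamma> \<sigma> n = hist \<gamma> \<sigma> (Suc n) ! n"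

definition prefX :: "('o \<Rightarrow> 'o \<Rightarrow> bool) \<Rightarrow> player \<Rightarrow> 'o \<Rightarrow> 'o \<Rightarrow> bool" where
  "prefX r X x y = (if X = Pa then r x y else r y x)"

(* \<sigma>_{X \<mapsto> s}; strategies are represented as total functions whose values
   outside d^{-1}({X}) are irrelevant *)
definition upd :: "('c list \<Rightarrow> player) \<Rightarrow> ('c list \<Rightarrow> 'c) \<Rightarrow> player \<Rightarrow> ('c list \<Rightarrow> 'c) \<Rightarrow> 'c list \<Rightarrow> 'c" where
  "upd d \<sigma> X s = (\<lambda>h. if d h = X then s h else \<sigma> h)"

definition is_SPE :: "('c list \<Rightarrow> player) \<Rightarrow> ((nat \<Rightarrow> 'c) \<Rightarrow> 'o) \<Rightarrow> ('o \<Rightarrow> 'o \<Rightarrow> bool) \<Rightarrow> ('c list \<Rightarrow> 'c) \<Rightarrow> bool" where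
  "is_SPE d v r \<sigma> \<longleftrightarrow>
     \<not> (\<exists>\<gamma> X s. prefX r X (v (playg \<gamma> \<sigma>)) (v (playg \<gamma> (upd d \<sigma> X s))))"

definition cyl :: "'c list \<Rightarrow> (nat \<Rightarrow> 'c) set" where
  "cyl \<gamma> = {p. \<forall>i < length \<gamma>. p i = \<gamma> ! i}"

(* P(s|_\<gamma>): plays p(\<sigma>) of total profiles \<sigma> extending the restriction of the
   strategy s of X (domain d^{-1}({X})) to histories extending \<gamma> *)
definition Pres :: "('c list \<Rightarrow> player) \<Rightarrow> player \<Rightarrow> 'c list \<Rightarrow> ('c list \<Rightarrow> 'c) \<Rightarrow> (nat \<Rightarrow> 'c) set" where
  "Pres d X \<gamma> s = {playg [] \<sigma> | \<sigma>. \<forall>h. d h = X \<and> take (length \<gamma>) h = \<gamma> \<longrightarrow> \<sigma> h = s h}"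

definition gX :: "('c list \<Rightarrow> player) \<Rightarrow> ((nat \<Rightarrow> 'c) \<Rightarrow> 'o) \<Rightarrow> ('o \<Rightarrow> 'o \<Rightarrow> bool) \<Rightarrow> player \<Rightarrow> 'c list \<Rightarrow> ('c list \<Rightarrow> 'c) \<Rightarrow> 'o set" where
  "gX d v r X \<gamma> s = {x. \<exists>p \<in> Pres d X \<gamma> s \<inter> cyl \<gamma>. \<not> prefX r X x (v p)}"

definition GX :: "('c list \<Rightarrow> player) \<Rightarrow> ((nat \<Rightarrow> 'c) \<Rightarrow> 'o) \<Rightarrow> ('o \<Rightarrow> 'o \<Rightarrow> bool) \<Rightarrow> player \<Rightarrow> 'c list \<Rightarrow> 'o set" where
  "GX d v r X \<gamma> = (\<Inter>s. gX d v r X \<gamma> s)"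

definition strict_weak_order :: "('o \<Rightarrow> 'o \<Rightarrow> bool) \<Rightarrow> bool" where
  "strict_weak_order r \<longleftrightarrow> (\<forall>x. \<not> r x x) \<and> (\<forall>x y z. r x y \<and> r y z \<longrightarrow> r x z)
     \<and> (\<forall>x y z. \<not> r x y \<and> \<not> r y z \<longrightarrow> \<not> r x z)"

definition extremal_interval :: "('o \<Rightarrow> 'o \<Rightarrow> bool) \<Rightarrow> 'o set \<Rightarrow> bool" where
  "extremal_interval r I \<longleftrightarrow>
     (\<forall>x \<in> I. \<forall>y. \<not> r y x \<longrightarrow> y \<in> I) \<or> (\<forall>x \<in> I. \<forall>y. \<not> r x y \<longrightarrow> y \<in> I)"

(* closed sets of the product of discrete topologies on C^\<omega> *)
definition closed_plays :: "(nat \<Rightarrow> 'c) set \<Rightarrow> bool" where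
  "closed_plays E \<longleftrightarrow> (\<forall>p. (\<forall>n. \<exists>q \<in> E. pre q n = pre p n) \<longrightarrow> p \<in> E)"

definition wl_play :: "'c list set \<Rightarrow> ('c list \<Rightarrow> 'c) \<Rightarrow> ('c list \<Rightarrow> 'c) \<Rightarrow> nat \<Rightarrow> 'c" where
  "wl_play D s1 s2 = playg [] (\<lambda>h. if h \<in> D then s1 h else s2 h)"

definition wl_determined :: "'c list set \<Rightarrow> (nat \<Rightarrow> 'c) set \<Rightarrow> bool" where
  "wl_determined D W \<longleftrightarrow>
     (\<exists>s1. \<forall>s2. wl_play D s1 s2 \<in> W) \<or> (\<exists>s2. \<forall>s1. wl_play D s1 s2 \<notin> W)"

end

theory Submission
  imports Defs
begin

text \<open>
  Fix a player X and, by hypothesis (3), an optimal strategy S \<alpha> at every history \<alpha>.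
  The stitched strategy plays at a history h the strategy S \<alpha> of the anchor \<alpha> of h, the
  latest prefix of h at which G_X dropped or X deviated from the strategy then in force.
  Along every play p consistent with it from \<gamma>, G_X is antitone. If it stabilises, the tail
  of p follows a single S \<alpha>, so v p lies in G_X \<alpha>, which is contained in G_X \<gamma>. If it drops
  infinitely often, let q n be a worst play for S (pre p n), so that G_X (pre p n) is the set
  of outcomes not X-below v (q n); p together with the q n forms a closed set, and by (4) its
  X-best element can only be p, whence again v p lies in G_X \<gamma>.

  Combining both players' stitched strategies gives the profile. After \<gamma>, a deviation of X
  yields a play consistent with the opponent's strategy, so the equilibrium play has value in
  G_a \<gamma> and G_b \<gamma>, and the deviating play in G_Y \<gamma> for the opponent Y. Determinacy (5, 6) of
  the win-lose game "reach a value above x from \<gamma>" shows that no element of G_a \<gamma> is below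
  an element of G_b \<gamma>, so the deviation is not profitable.
\<close>

lemma length_pre [simp]: "length (pre p n) = n"
  by (simp add: pre_def)

lemma pre_0 [simp]: "pre p 0 = []"
  by (simp add: pre_def)

lemma pre_Suc: "pre p (Suc n) = pre p n @ [p n]"
  by (simp add: pre_def)

lemma nth_pre [simp]: "i < n \<Longrightarrow> pre p n ! i = p i"
  by (simp add: pre_def)

lemma take_pre [simp]: "take m (pre p n) = pre p (min m n)"
  by (simp add: pre_def take_map min_def take_upt)

lemma eq_if_pre_eq:
  assumes "\<And>n. pre p n = pre q n"
  shows "p = q"
proof
  fix i
  have "pre p (Suc i) ! i = pre q (Suc i) ! i" by (simp only: assms)
  then show "p i = q i" by simp
qed

lemma mem_cyl_iff_pre: "p \<in> cyl \<gamma> \<longleftrightarrow> pre p (length \<gamma>) = \<gamma>"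
  by (simp add: cyl_def list_eq_iff_nth_eq)

lemma length_hist [simp]: "length (hist \<gamma> \<sigma> n) = n"
  by (induct n) auto

lemma take_hist: "m \<le> n \<Longrightarrow> take m (hist \<gamma> \<sigma> n) = hist \<gamma> \<sigma> m"
  by (induct n) (auto simp: le_Suc_eq)

lemma pre_playg: "pre (playg \<gamma> \<sigma>) n = hist \<gamma> \<sigma> n"
proof (rule nth_equalityI)
  fix i assume "i < length (pre (playg \<gamma> \<sigma>) n)"
  then have "i < n" by simp
  then show "pre (playg \<gamma> \<sigma>) n ! i = hist \<gamma> \<sigma> n ! i"
    by (metis Suc_leI lessI nth_pre nth_take playg_def take_hist)
qed simp

lemma playg_eq: "playg \<gamma> \<sigma> n = (if n < length \<gamma> then \<gamma> ! n else \<sigma> (pre (playg \<gamma> \<sigma>) n))"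
  by (simp add: pre_playg playg_def nth_append)

lemma playg_in_cyl: "playg \<gamma> \<sigma> \<in> cyl \<gamma>"
  by (simp add: cyl_def playg_eq)

lemma plays_following_eq:
  assumes "pre p k = pre q k"
    and "\<And>n. k \<le> n \<Longrightarrow> p n = \<sigma> (pre p n)" and "\<And>n. k \<le> n \<Longrightarrow> q n = \<sigma> (pre q n)"
  shows "p = q"
proof (rule eq_if_pre_eq)
  have "pre p (k + i) = pre q (k + i)" for i
    by (induct i) (simp_all add: assms pre_Suc)
  then show "pre p n = pre q n" for n
    by (metis le_add2 min.absorb1 take_pre)
qed

lemma playg_Nil_eq: "(\<And>n. p n = \<sigma> (pre p n)) \<Longrightarrow> playg [] \<sigma> = p"
  by (rule plays_following_eq[of _ 0]) (simp_all add: playg_eq[of "[]"])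

definition consistent ::
  "('c list \<Rightarrow> player) \<Rightarrow> player \<Rightarrow> ('c list \<Rightarrow> 'c) \<Rightarrow> 'c list \<Rightarrow> (nat \<Rightarrow> 'c) \<Rightarrow> bool" where
  "consistent d X s \<gamma> p \<longleftrightarrow> p \<in> cyl \<gamma> \<and> (\<forall>n \<ge> length \<gamma>. d (pre p n) = X \<longrightarrow> p n = s (pre p n))"

lemma consistent_playg: "(\<And>h. d h = X \<Longrightarrow> \<sigma> h = s h) \<Longrightarrow> consistent d X s \<gamma> (playg \<gamma> \<sigma>)"
  by (auto simp: consistent_def playg_in_cyl playg_eq[of \<gamma> \<sigma>])

lemma Pres_Int_cyl: "Pres d X \<gamma> s \<inter> cyl \<gamma> = {p. consistent d X s \<gamma> p}"
proof (intro equalityI subsetI)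
  fix p assume "p \<in> Pres d X \<gamma> s \<inter> cyl \<gamma>"
  then obtain \<sigma> where p: "p = playg [] \<sigma>" and "p \<in> cyl \<gamma>"
    and \<sigma>: "\<And>h. d h = X \<Longrightarrow> take (length \<gamma>) h = \<gamma> \<Longrightarrow> \<sigma> h = s h"
    unfolding Pres_def by auto
  moreover have "take (length \<gamma>) (pre p n) = \<gamma>" if "length \<gamma> \<le> n" for n
    using \<open>p \<in> cyl \<gamma>\<close> that by (simp add: mem_cyl_iff_pre min_def)
  ultimately show "p \<in> {p. consistent d X s \<gamma> p}"
    by (simp add: consistent_def playg_eq[of "[]"])
next
  fix p assume "p \<in> {p. consistent d X s \<gamma> p}"
  then have p: "p \<in> cyl \<gamma>" "\<And>n. length \<gamma> \<le> n \<Longrightarrow> d (pre p n) = X \<Longrightarrow> p n = s (pre p n)"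
    by (auto simp: consistent_def)
  define \<sigma> where "\<sigma> h = (if d h = X \<and> take (length \<gamma>) h = \<gamma> then s h else p (length h))" for h
  have "p n = \<sigma> (pre p n)" for n
  proof (cases "d (pre p n) = X \<and> take (length \<gamma>) (pre p n) = \<gamma>")
    case True
    then have "length \<gamma> \<le> n"
      by (metis length_pre min.absorb_iff1 take_pre)
    with True show ?thesis by (simp add: \<sigma>_def p(2))
  next
    case False
    then show ?thesis unfolding \<sigma>_def by (simp only: if_False length_pre)
  qed
  then have "playg [] \<sigma> = p" by (rule playg_Nil_eq)
  then show "p \<in> Pres d X \<gamma> s \<inter> cyl \<gamma>"
    using p(1) unfolding Pres_def by (auto simp: \<sigma>_def)
qed

lemma gX_eq: "gX d v r X \<gamma> s = {x. \<exists>p. consistent d X s \<gamma> p \<and> \<not> prefX r X x (v p)}"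
  unfolding gX_def Pres_Int_cyl by simp

lemma closed_plays_consistent: "closed_plays {p. consistent d X s \<gamma> p}"
  unfolding closed_plays_def
proof (intro allI impI)
  fix p assume approx: "\<forall>n. \<exists>q \<in> {q. consistent d X s \<gamma> q}. pre q n = pre p n"
  have "p \<in> cyl \<gamma>"
    using approx by (metis consistent_def mem_Collect_eq mem_cyl_iff_pre)
  moreover have "p n = s (pre p n)" if "length \<gamma> \<le> n" "d (pre p n) = X" for n
  proof -
    obtain q where "consistent d X s \<gamma> q" "pre q (Suc n) = pre p (Suc n)" using approx by blast
    with that show ?thesis by (auto simp: consistent_def pre_Suc)
  qed
  ultimately show "p \<in> {q. consistent d X s \<gamma> q}" by (simp add: consistent_def)
qed

lemma strict_weak_order_not_trans: "strict_weak_order r \<Longrightarrow> \<not> r a b \<Longrightarrow> \<not> r b c \<Longrightarrow> \<not> r a c"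
  unfolding strict_weak_order_def by meson

lemma not_prefX_trans:
  "strict_weak_order r \<Longrightarrow> \<not> prefX r X a b \<Longrightarrow> \<not> prefX r X b c \<Longrightarrow> \<not> prefX r X a c"
  using strict_weak_order_not_trans[of r a b c] strict_weak_order_not_trans[of r c b a]
  by (cases X) (simp_all add: prefX_def)

lemma prefX_irrefl: "strict_weak_order r \<Longrightarrow> \<not> prefX r X a a"
  by (simp add: prefX_def strict_weak_order_def)

definition follows_from ::
  "('c list \<Rightarrow> player) \<Rightarrow> player \<Rightarrow> ('c list \<Rightarrow> 'c) \<Rightarrow> 'c list \<Rightarrow> 'c list \<Rightarrow> bool" where
  "follows_from d X s \<alpha> h \<longleftrightarrow> take (length \<alpha>) h = \<alpha> \<and> length \<alpha> \<le> length h \<and>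
     (\<forall>m. length \<alpha> \<le> m \<and> m < length h \<and> d (take m h) = X \<longrightarrow> h ! m = s (take m h))"

lemma follows_from_refl: "follows_from d X s h h"
  by (auto simp: follows_from_def)

lemma follows_from_snoc:
  "follows_from d X s \<alpha> h \<Longrightarrow> (d h = X \<longrightarrow> c = s h) \<Longrightarrow> follows_from d X s \<alpha> (h @ [c])"
  unfolding follows_from_def by (auto simp: nth_append less_Suc_eq)

lemma consistent_if_follows_from:
  assumes "consistent d X s h p" and "follows_from d X s \<alpha> h"
  shows "consistent d X s \<alpha> p"
proof -
  have h: "pre p (length h) = h" using assms(1) by (simp add: consistent_def mem_cyl_iff_pre)
  then have "pre p (length \<alpha>) = \<alpha>"
    using assms(2) by (metis follows_from_def min.absorb1 take_pre)
  moreover have "p n = s (pre p n)" if "length \<alpha> \<le> n" "d (pre p n) = X" for n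
  proof (cases "n < length h")
    case True
    then have "take n h = pre p n" "h ! n = p n" using h by (metis min.strict_order_iff take_pre, metis nth_pre)
    with True that assms(2) show ?thesis by (metis follows_from_def)
  next
    case False
    with that assms(1) show ?thesis by (simp add: consistent_def)
  qed
  ultimately show ?thesis by (simp add: consistent_def mem_cyl_iff_pre)
qed

lemma gX_antimono: "follows_from d X s \<alpha> h \<Longrightarrow> gX d v r X h s \<subseteq> gX d v r X \<alpha> s"
  by (auto simp: gX_eq intro: consistent_if_follows_from)

lemma GX_subset_if_follows_from:
  assumes "gX d v r X \<alpha> s = GX d v r X \<alpha>" and "follows_from d X s \<alpha> h"
  shows "GX d v r X h \<subseteq> GX d v r X \<alpha>"
proof -
  have "GX d v r X h \<subseteq> gX d v r X h s" by (auto simp: GX_def)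
  also have "\<dots> \<subseteq> gX d v r X \<alpha> s" using assms(2) by (rule gX_antimono)
  finally show ?thesis using assms(1) by simp
qed

lemma closed_plays_insert_limit:
  assumes q: "\<And>n. n \<in> A \<Longrightarrow> pre (q n) n = pre p n"
  shows "closed_plays (insert p (q ` A))"
  unfolding closed_plays_def
proof (intro allI impI)
  fix p' assume approx: "\<forall>n. \<exists>e \<in> insert p (q ` A). pre e n = pre p' n"
  show "p' \<in> insert p (q ` A)"
  proof (rule ccontr)
    assume p': "p' \<notin> insert p (q ` A)"
    then obtain k where k: "p' k \<noteq> p k" by auto
    define F where "F = A \<inter> {..k}"
    have "\<forall>n \<in> F. q n \<noteq> p'" using p' by (auto simp: F_def)
    then have "\<forall>n \<in> F. \<exists>i. q n i \<noteq> p' i" by (simp add: fun_eq_iff)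
    then obtain i where i: "\<And>n. n \<in> F \<Longrightarrow> q n (i n) \<noteq> p' (i n)" by metis
    define B where "B = Suc (Max (insert k (i ` F)))"
    have "finite F" by (simp add: F_def)
    then have "k < B" "\<And>n. n \<in> F \<Longrightarrow> i n < B" by (auto simp: B_def less_Suc_eq_le)
    obtain e where e: "e \<in> insert p (q ` A)" "pre e B = pre p' B" using approx by blast
    then have "e k = p' k" using \<open>k < B\<close> by (metis nth_pre)
    with e(1) k obtain n where n: "n \<in> A" "e = q n" by auto
    have "n \<le> k"
    proof (rule ccontr)
      assume "\<not> n \<le> k"
      then have "q n k = p k" using q[OF n(1)] by (metis not_le nth_pre)
      with \<open>e k = p' k\<close> n(2) k show False by simp
    qed
    with n have "n \<in> F" by (simp add: F_def)
    then have "e (i n) = p' (i n)" using e(2) \<open>n \<in> F \<Longrightarrow> i n < B\<close> by (metis nth_pre)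
    with i[OF \<open>n \<in> F\<close>] n(2) show False by simp
  qed
qed

lemma wl_play_eq: "wl_play D s1 s2 n = (if pre (wl_play D s1 s2) n \<in> D then s1 else s2) (pre (wl_play D s1 s2) n)"
  unfolding wl_play_def by (subst playg_eq) simp

lemma wl_play_counter_Pa:
  assumes "consistent d Pa s1 \<gamma> p"
    and "wl_play {h. length h < length \<gamma> \<or> d h = Pa} s1 (\<lambda>h. p (length h)) \<in> cyl \<gamma>"
  shows "wl_play {h. length h < length \<gamma> \<or> d h = Pa} s1 (\<lambda>h. p (length h)) = p"
  by (rule plays_following_eq[where k = "length \<gamma>"
        and \<sigma> = "\<lambda>h. if h \<in> {h. length h < length \<gamma> \<or> d h = Pa} then s1 h else p (length h)"])
    (use assms in \<open>auto simp: consistent_def mem_cyl_iff_pre wl_play_eq\<close>)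

lemma wl_play_counter_Pb:
  assumes "consistent d Pb s2 \<gamma> p"
  shows "wl_play {h. length h < length \<gamma> \<or> d h = Pa} (\<lambda>h. p (length h)) s2 = p"
  unfolding wl_play_def
proof (rule playg_Nil_eq)
  fix n
  show "p n = (if pre p n \<in> {h. length h < length \<gamma> \<or> d h = Pa} then p (length (pre p n)) else s2 (pre p n))"
    using assms by (cases "d (pre p n)") (auto simp: consistent_def)
qed

lemma GX_Pa_not_below_GX_Pb:
  assumes swo: "strict_weak_order r"
    and gam: "\<And>I. extremal_interval r I \<Longrightarrow> v -` I \<inter> cyl \<gamma> \<in> \<Gamma>"
    and det: "\<And>W D. W \<in> \<Gamma> \<Longrightarrow> wl_determined D W"
    and x: "x \<in> GX d v r Pa \<gamma>" and y: "y \<in> GX d v r Pb \<gamma>"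
  shows "\<not> r x y"
proof
  assume "r x y"
  define I where "I = {z. r x z}"
  have "extremal_interval r I"
    using strict_weak_order_not_trans[OF swo, of x] unfolding extremal_interval_def I_def by blast
  define D where "D = {h. length h < length \<gamma> \<or> d h = Pa}"
  have "wl_determined D (v -` I \<inter> cyl \<gamma>)" using det gam \<open>extremal_interval r I\<close> by blast
  then show False unfolding wl_determined_def
  proof (elim disjE exE)
    fix s1 assume s1: "\<forall>s2. wl_play D s1 s2 \<in> v -` I \<inter> cyl \<gamma>"
    obtain p where p: "consistent d Pa s1 \<gamma> p" "\<not> r x (v p)"
      using x by (auto simp: GX_def gX_eq prefX_def)
    have "wl_play D s1 (\<lambda>h. p (length h)) = p"
      using wl_play_counter_Pa[OF p(1)] s1 by (simp add: D_def)
    with s1 p(2) show False by (metis I_def IntD1 mem_Collect_eq vimageE)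
  next
    fix s2 assume s2: "\<forall>s1. wl_play D s1 s2 \<notin> v -` I \<inter> cyl \<gamma>"
    obtain p where p: "consistent d Pb s2 \<gamma> p" "\<not> r (v p) y"
      using y by (auto simp: GX_def gX_eq prefX_def)
    have "wl_play D (\<lambda>h. p (length h)) s2 = p"
      unfolding D_def using p(1) by (rule wl_play_counter_Pb)
    with s2 p(1) have "v p \<notin> I" by (metis IntI consistent_def vimageI)
    with p(2) \<open>r x y\<close> show False
      using strict_weak_order_not_trans[OF swo, of x "v p" y] by (simp add: I_def)
  qed
qed

function anchor ::
  "('c list \<Rightarrow> 'o set) \<Rightarrow> ('c list \<Rightarrow> 'c list \<Rightarrow> 'c) \<Rightarrow>
    ('c list \<Rightarrow> player) \<Rightarrow> player \<Rightarrow> 'c list \<Rightarrow> 'c list" where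
  "anchor G S d X [] = []"
| "anchor G S d X (h @ [c]) =
     (let \<alpha> = anchor G S d X h in
      if G (h @ [c]) = G \<alpha> \<and> (d h = X \<longrightarrow> c = S \<alpha> h) then \<alpha> else h @ [c])"
  by (metis rev_exhaust prod_cases5) auto
termination by (relation "measure (\<lambda>(_, _, _, _, h). length h)") auto

lemma anchor_invariant:
  "follows_from d X (S (anchor G S d X h)) (anchor G S d X h) h \<and> G (anchor G S d X h) = G h"
proof (induct h rule: rev_induct)
  case (snoc c h)
  then show ?case by (auto simp: Let_def follows_from_refl intro: follows_from_snoc)
qed (simp add: follows_from_refl)

lemma follows_from_anchor: "follows_from d X (S (anchor G S d X h)) (anchor G S d X h) h"
  by (rule conjunct1[OF anchor_invariant])

lemma G_anchor [simp]: "G (anchor G S d X h) = G h"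
  by (rule conjunct2[OF anchor_invariant])

lemma anchor_eventually_constant:
  assumes G: "\<And>m. N \<le> m \<Longrightarrow> G (pre p m) = G (pre p N)"
    and p: "\<And>m. N \<le> m \<Longrightarrow> d (pre p m) = X \<Longrightarrow> p m = S (anchor G S d X (pre p m)) (pre p m)"
    and "N \<le> m"
  shows "anchor G S d X (pre p m) = anchor G S d X (pre p N)"
  using \<open>N \<le> m\<close>
proof (induct m rule: dec_induct)
  case (step m)
  have "G (pre p (Suc m)) = G (anchor G S d X (pre p m))"
    using G[of m] G[of "Suc m"] step(1) by simp
  with p[of m] step show ?case by (simp add: pre_Suc Let_def)
qed simp

lemma GX_snoc_subset_anchored:
  assumes S: "\<And>\<gamma>. gX d v r X \<gamma> (S \<gamma>) = GX d v r X \<gamma>"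
    and "d h = X \<longrightarrow> c = S (anchor (GX d v r X) S d X h) h"
  shows "GX d v r X (h @ [c]) \<subseteq> GX d v r X h"
proof -
  let ?\<alpha> = "anchor (GX d v r X) S d X h"
  have "follows_from d X (S ?\<alpha>) ?\<alpha> (h @ [c])"
    using follows_from_anchor assms(2) by (rule follows_from_snoc)
  then have "GX d v r X (h @ [c]) \<subseteq> GX d v r X ?\<alpha>" by (rule GX_subset_if_follows_from[OF S])
  then show ?thesis by simp
qed

lemma mem_GX_if_stabilises:
  assumes swo: "strict_weak_order r"
    and S: "\<And>\<gamma>. gX d v r X \<gamma> (S \<gamma>) = GX d v r X \<gamma>"
    and p: "\<And>n. k \<le> n \<Longrightarrow> d (pre p n) = X \<Longrightarrow> p n = S (anchor (GX d v r X) S d X (pre p n)) (pre p n)"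
    and "k \<le> N" and stable: "\<And>m. N \<le> m \<Longrightarrow> GX d v r X (pre p m) = GX d v r X (pre p N)"
  shows "v p \<in> GX d v r X (pre p N)"
proof -
  define \<alpha> where "\<alpha> = anchor (GX d v r X) S d X (pre p N)"
  have "anchor (GX d v r X) S d X (pre p m) = \<alpha>" if "N \<le> m" for m
    unfolding \<alpha>_def
  proof (rule anchor_eventually_constant[where G = "GX d v r X" and p = p, OF stable _ that])
    fix m assume "N \<le> m" "d (pre p m) = X"
    moreover have "k \<le> m" using \<open>k \<le> N\<close> \<open>N \<le> m\<close> by linarith
    ultimately show "p m = S (anchor (GX d v r X) S d X (pre p m)) (pre p m)" using p by blast
  qed
  then have "consistent d X (S \<alpha>) (pre p N) p"
    using p \<open>k \<le> N\<close> by (auto simp: consistent_def mem_cyl_iff_pre)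
  then have "consistent d X (S \<alpha>) \<alpha> p"
    using follows_from_anchor unfolding \<alpha>_def by (rule consistent_if_follows_from)
  then have "v p \<in> gX d v r X \<alpha> (S \<alpha>)"
    using prefX_irrefl[OF swo] by (auto simp: gX_eq)
  also have "\<dots> = GX d v r X (pre p N)" by (simp add: S \<alpha>_def)
  finally show ?thesis .
qed

locale extremal_game =
  fixes d :: "'c list \<Rightarrow> player" and v :: "(nat \<Rightarrow> 'c) \<Rightarrow> 'o" and r :: "'o \<Rightarrow> 'o \<Rightarrow> bool"
  assumes swo: "strict_weak_order r"
    and extremal: "\<And>E. E \<noteq> {} \<Longrightarrow> closed_plays E \<Longrightarrow>
          (\<exists>x \<in> v ` E. \<forall>y \<in> v ` E. \<not> r x y) \<and> (\<exists>x \<in> v ` E. \<forall>y \<in> v ` E. \<not> r y x)"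
begin

lemma extremal_prefX:
  assumes "E \<noteq> {}" and "closed_plays E"
  shows "\<exists>x \<in> E. \<forall>y \<in> E. \<not> prefX r X (v x) (v y)"
    and "\<exists>x \<in> E. \<forall>y \<in> E. \<not> prefX r X (v y) (v x)"
  using extremal[OF assms] by (cases X; auto simp: prefX_def)+

lemma gX_eq_worst_play: "\<exists>q. consistent d X s \<gamma> q \<and> gX d v r X \<gamma> s = {x. \<not> prefX r X x (v q)}"
proof -
  have "{p. consistent d X s \<gamma> p} \<noteq> {}" using consistent_playg[of d X s s \<gamma>] by auto
  then obtain q where q: "consistent d X s \<gamma> q"
    and worst: "\<And>p. consistent d X s \<gamma> p \<Longrightarrow> \<not> prefX r X (v p) (v q)"
    using extremal_prefX(2)[OF _ closed_plays_consistent] by blast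
  have "gX d v r X \<gamma> s = {x. \<not> prefX r X x (v q)}"
    using q worst not_prefX_trans[OF swo] by (auto simp: gX_eq)
  with q show ?thesis by blast
qed

lemma mem_GX_if_drops_infinitely_often:
  assumes opt: "\<And>\<gamma>. \<exists>s. gX d v r X \<gamma> s = GX d v r X \<gamma>"
    and antitone: "\<And>n m. k \<le> n \<Longrightarrow> n \<le> m \<Longrightarrow> GX d v r X (pre p m) \<subseteq> GX d v r X (pre p n)"
    and drops: "\<And>n. k \<le> n \<Longrightarrow> \<exists>m \<ge> n. GX d v r X (pre p m) \<noteq> GX d v r X (pre p n)"
  shows "v p \<in> GX d v r X (pre p k)"
proof -
  have "\<exists>q. pre q n = pre p n \<and> GX d v r X (pre p n) = {x. \<not> prefX r X x (v q)}" for n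
    using opt[of "pre p n"] gX_eq_worst_play[of X _ "pre p n"]
    by (metis consistent_def length_pre mem_cyl_iff_pre)
  then obtain q where q: "\<And>n. pre (q n) n = pre p n"
    and worst: "\<And>n. GX d v r X (pre p n) = {x. \<not> prefX r X x (v (q n))}" by metis
  define E where "E = insert p (q ` {k..})"
  have "closed_plays E" unfolding E_def using q by (rule closed_plays_insert_limit)
  then obtain e where "e \<in> E" and best: "\<And>y. y \<in> E \<Longrightarrow> \<not> prefX r X (v e) (v y)"
    using extremal_prefX(1)[of E X] by (auto simp: E_def)
  have "e = p"
  proof (rule ccontr)
    assume "e \<noteq> p"
    with \<open>e \<in> E\<close> obtain n where n: "k \<le> n" "e = q n" by (auto simp: E_def)
    obtain m where m: "n \<le> m" "GX d v r X (pre p m) \<noteq> GX d v r X (pre p n)" using drops[OF n(1)] by blast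
    with antitone[OF n(1)] obtain x where "x \<in> GX d v r X (pre p n)" "x \<notin> GX d v r X (pre p m)"
      by blast
    then have "prefX r X (v (q n)) (v (q m))"
      using worst[of n] worst[of m] not_prefX_trans[OF swo, of X x] by auto
    moreover have "q m \<in> E" using n m by (auto simp: E_def)
    ultimately show False using best n(2) by blast
  qed
  moreover have "q k \<in> E" by (simp add: E_def)
  ultimately show ?thesis using best worst[of k] by blast
qed

lemma uniformly_optimal_strategy:
  assumes opt: "\<And>\<gamma>. \<exists>s. gX d v r X \<gamma> s = GX d v r X \<gamma>"
  shows "\<exists>\<sigma>. \<forall>\<gamma> p. consistent d X \<sigma> \<gamma> p \<longrightarrow> v p \<in> GX d v r X \<gamma>"
proof -
  obtain S where S: "\<And>\<gamma>. gX d v r X \<gamma> (S \<gamma>) = GX d v r X \<gamma>" using opt by metis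
  define \<sigma> where "\<sigma> h = S (anchor (GX d v r X) S d X h) h" for h
  have "v p \<in> GX d v r X (pre p k)" if p: "consistent d X \<sigma> (pre p k) p" for p k
  proof -
    have p_plays: "p n = S (anchor (GX d v r X) S d X (pre p n)) (pre p n)"
      if "k \<le> n" "d (pre p n) = X" for n
      using p that by (simp add: consistent_def \<sigma>_def)
    have antitone: "GX d v r X (pre p m) \<subseteq> GX d v r X (pre p n)" if "k \<le> n" "n \<le> m" for n m
      using that(2)
    proof (induct m rule: dec_induct)
      case (step m)
      then have "k \<le> m" using that(1) by linarith
      then have "GX d v r X (pre p m @ [p m]) \<subseteq> GX d v r X (pre p m)"
        by (intro GX_snoc_subset_anchored[OF S]) (simp add: p_plays)
      with step show ?case by (simp add: pre_Suc)
    qed simp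
    show ?thesis
    proof (cases "\<exists>N \<ge> k. \<forall>m \<ge> N. GX d v r X (pre p m) = GX d v r X (pre p N)")
      case True
      then obtain N where N: "k \<le> N" "\<And>m. N \<le> m \<Longrightarrow> GX d v r X (pre p m) = GX d v r X (pre p N)"
        by blast
      have "v p \<in> GX d v r X (pre p N)" using swo S p_plays N by (rule mem_GX_if_stabilises)
      with antitone N(1) show ?thesis by blast
    next
      case False
      then show ?thesis
        by (intro mem_GX_if_drops_infinitely_often[OF opt antitone]) blast+
    qed
  qed
  then show ?thesis by (metis consistent_def mem_cyl_iff_pre)
qed

end

lemma is_SPE_combined_strategies:
  assumes a: "\<And>\<gamma> p. consistent d Pa \<sigma>a \<gamma> p \<Longrightarrow> v p \<in> GX d v r Pa \<gamma>"
    and b: "\<And>\<gamma> p. consistent d Pb \<sigma>b \<gamma> p \<Longrightarrow> v p \<in> GX d v r Pb \<gamma>"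
    and separated: "\<And>\<gamma> x y. x \<in> GX d v r Pa \<gamma> \<Longrightarrow> y \<in> GX d v r Pb \<gamma> \<Longrightarrow> \<not> r x y"
  shows "is_SPE d v r (\<lambda>h. if d h = Pa then \<sigma>a h else \<sigma>b h)" (is "is_SPE d v r ?\<sigma>")
  unfolding is_SPE_def
proof (intro notI, elim exE)
  fix \<gamma> X s
  assume deviation: "prefX r X (v (playg \<gamma> ?\<sigma>)) (v (playg \<gamma> (upd d ?\<sigma> X s)))"
  have "v (playg \<gamma> ?\<sigma>) \<in> GX d v r Pa \<gamma>" by (rule a, rule consistent_playg) simp
  moreover have "v (playg \<gamma> ?\<sigma>) \<in> GX d v r Pb \<gamma>" by (rule b, rule consistent_playg) simp
  moreover have "X = Pa \<Longrightarrow> v (playg \<gamma> (upd d ?\<sigma> X s)) \<in> GX d v r Pb \<gamma>"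
    by (rule b, rule consistent_playg) (simp add: upd_def)
  moreover have "X = Pb \<Longrightarrow> v (playg \<gamma> (upd d ?\<sigma> X s)) \<in> GX d v r Pa \<gamma>"
    by (rule a, rule consistent_playg) (simp add: upd_def)
  ultimately show False
    using deviation separated by (cases X) (auto simp: prefX_def)
qed

theorem lemma22:
  fixes d :: "'c list \<Rightarrow> player"
    and v :: "(nat \<Rightarrow> 'c) \<Rightarrow> 'o"
    and r :: "'o \<Rightarrow> 'o \<Rightarrow> bool"
    and \<Gamma> :: "(nat \<Rightarrow> 'c) set set"
  assumes swo: "strict_weak_order r"
    and lim: "\<And>p \<phi>. strict_mono \<phi> \<Longrightarrow>
          (\<forall>n. d (pre p (\<phi> n)) = Pa \<and>
               GX d v r Pa (pre p (\<phi> (Suc n))) \<subset> GX d v r Pa (pre p (\<phi> n))) \<Longrightarrow>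
          v p \<in> (\<Inter>n. GX d v r Pa (pre p (\<phi> n)))"
    and opt: "\<And>\<gamma>. (\<exists>s. gX d v r Pa \<gamma> s = GX d v r Pa \<gamma>) \<and> (\<exists>s. gX d v r Pb \<gamma> s = GX d v r Pb \<gamma>)"
    and ext: "\<And>E. E \<noteq> {} \<Longrightarrow> closed_plays E \<Longrightarrow>
          (\<exists>x \<in> v ` E. \<forall>y \<in> v ` E. \<not> r x y) \<and> (\<exists>x \<in> v ` E. \<forall>y \<in> v ` E. \<not> r y x)"
    and gam: "\<And>I \<gamma>. extremal_interval r I \<Longrightarrow> v -` I \<inter> cyl \<gamma> \<in> \<Gamma>"
    and det: "\<And>W D. W \<in> \<Gamma> \<Longrightarrow> wl_determined D W"
  shows "\<exists>\<sigma>. is_SPE d v r \<sigma>"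
proof -
  interpret extremal_game d v r using swo ext by unfold_locales
  obtain \<sigma>a where "\<And>\<gamma> p. consistent d Pa \<sigma>a \<gamma> p \<Longrightarrow> v p \<in> GX d v r Pa \<gamma>"
    using uniformly_optimal_strategy opt by metis
  moreover obtain \<sigma>b where "\<And>\<gamma> p. consistent d Pb \<sigma>b \<gamma> p \<Longrightarrow> v p \<in> GX d v r Pb \<gamma>"
    using uniformly_optimal_strategy opt by metis
  ultimately have "is_SPE d v r (\<lambda>h. if d h = Pa then \<sigma>a h else \<sigma>b h)"
    using GX_Pa_not_below_GX_Pb[OF swo gam det] by (rule is_SPE_combined_strategies)
  then show ?thesis by blast
qed

end
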